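(* Let $s \geq 1$, $\Gamma = (\gamma_1, \ldots, \gamma_s), \alpha = (\alpha_1, \ldots, \alpha_s) \in \mathbb{Z}^s$, and $u \in \mathbb{Z}_{\geq 0}$. For any fixed $\Pi \subset [s]$ with $|\Pi| > u$, \[ \sum_{\substack{\sigma \in \mathfrak{S}_s \\ M \subset \Pi}} (-1)^{|M|} \operatorname{sgn}(\sigma)\, \Delta_s(\sigma \cdot^\alpha \Gamma - 1_M)\, |M|^u = 0. \]
   Context: For $\sigma \in \mathfrak{S}_s$ and $\Gamma \in \mathbb{Z}^s$, $\sigma \cdot \Gamma = (\gamma_{\sigma^{-1}(1)}, \ldots, \gamma_{\sigma^{-1}(s)})$, and $\sigma \cdot^\alpha \Gamma = \sigma \cdot (\Gamma + \alpha) - \alpha$, i.e. its $\ell$-th entry is $\gamma_{\sigma^{-1}(\ell)} + \alpha_{\sigma^{-1}(\ell)} - \alpha_\ell$. $\Delta_s(y_1, \ldots, y_s) = \prod_{1 \leq v < w \leq s}(y_w - y_v)$. $1_M \in \{0,1\}^s$ is the indicator vector of $M \subset [s]$. The convention $0^0 = 1$ is used. *)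

theory Defs
  imports Main "HOL-Combinatorics.Permutations"
begin

text \<open>Vectors in Z^s are functions nat => int, relevant on indices {1..s}.\<close>

definition Delta :: "nat \<Rightarrow> (nat \<Rightarrow> int) \<Rightarrow> int" where
  "Delta s y = (\<Prod>w\<in>{1..s}. \<Prod>v\<in>{1..<w}. (y w - y v))"

definition perm_act :: "(nat \<Rightarrow> nat) \<Rightarrow> (nat \<Rightarrow> int) \<Rightarrow> (nat \<Rightarrow> int)" where
  "perm_act \<sigma> \<Gamma> = (\<lambda>l. \<Gamma> (inv \<sigma> l))"

definition perm_act_shift :: "(nat \<Rightarrow> int) \<Rightarrow> (nat \<Rightarrow> nat) \<Rightarrow> (nat \<Rightarrow> int) \<Rightarrow> (nat \<Rightarrow> int)" where
  "perm_act_shift \<alpha> \<sigma> \<Gamma> = (\<lambda>l. perm_act \<sigma> (\<lambda>i. \<Gamma> i + \<alpha> i) l - \<alpha> l)"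

definition ind_vec :: "nat set \<Rightarrow> (nat \<Rightarrow> int)" where
  "ind_vec M = (\<lambda>l. if l \<in> M then 1 else 0)"

end

(*
  Write d = Gamma + alpha and beta = alpha + 1_M, so that the l-th entry of sigma .^alpha Gamma - 1_M
  is d (inv sigma l) - beta l.  Expand Delta as the Vandermonde determinant
  sum_tau sgn tau * prod_l y_l ^ (tau l - 1), and each power (x - b)^n binomially.  Summing over
  sigma with signs turns every monomial prod_l d (sigma l) ^ (phi l) into an alternant, which
  vanishes unless phi is injective; but an injective phi with phi <= tau - 1 pointwise must equal
  tau - 1, and for that term the binomial coefficients are 1 and beta does not occur.  Hence the
  signed sum over sigma does not depend on M, and the theorem reduces to
  sum_{M subset Pi} (-1)^|M| |M|^u = 0, which holds because the alternating sum over all subsets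
  of Pi annihilates every polynomial in |M| of degree less than |Pi|.
*)

theory Submission
  imports Defs "HOL-Computational_Algebra.Polynomial" "HOL-Library.FuncSet"
begin

lemma sum_sign_eq_0_if_transpose_invariant:
  fixes g :: "('a \<Rightarrow> 'a) \<Rightarrow> 'b :: {idom, ring_char_0}"
  assumes "finite S" "a \<in> S" "b \<in> S" "a \<noteq> b"
    and invariant: "\<And>\<rho>. \<rho> permutes S \<Longrightarrow> g (\<rho> \<circ> transpose a b) = g \<rho>"
  shows "(\<Sum>\<rho> | \<rho> permutes S. of_int (sign \<rho>) * g \<rho>) = 0"
proof -
  let ?t = "transpose a b"
  have t: "?t permutes S" "sign ?t = -1"
    using assms by (simp_all add: permutes_swap_id sign_swap_id)
  let ?sum = "\<Sum>\<rho> | \<rho> permutes S. of_int (sign \<rho>) * g \<rho>"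
  have "?sum = (\<Sum>\<rho> | \<rho> permutes S. of_int (sign (\<rho> \<circ> ?t)) * g (\<rho> \<circ> ?t))"
    by (rule sum_permutations_compose_right[OF t(1)])
  also have "\<dots> = (\<Sum>\<rho> | \<rho> permutes S. - (of_int (sign \<rho>) * g \<rho>))"
  proof (rule sum.cong[OF refl])
    fix \<rho> assume "\<rho> \<in> {\<rho>. \<rho> permutes S}"
    then have "\<rho> permutes S" by simp
    moreover from this have "permutation \<rho>" "permutation ?t"
      using assms(1) t(1) permutation_permutes by blast+
    ultimately show "of_int (sign (\<rho> \<circ> ?t)) * g (\<rho> \<circ> ?t) = - (of_int (sign \<rho>) * g \<rho>)"
      by (simp add: invariant sign_compose t(2))
  qed
  finally have "?sum = - ?sum"
    by (simp add: sum_negf)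
  then have "2 * ?sum = 0"
    by (metis add.right_inverse mult_2)
  then show ?thesis
    by simp
qed

lemma sum_sign_comp_inv:
  assumes "finite S"
  shows "(\<Sum>\<sigma> | \<sigma> permutes S. sign \<sigma> * f (inv \<sigma>)) = (\<Sum>\<sigma> | \<sigma> permutes S. sign \<sigma> * f \<sigma>)"
proof -
  have "(\<Sum>\<sigma> | \<sigma> permutes S. sign \<sigma> * f \<sigma>) =
      (\<Sum>\<sigma> | \<sigma> permutes S. sign (inv \<sigma>) * f (inv \<sigma>))"
    by (rule sum_permutations_inverse)
  also have "\<dots> = (\<Sum>\<sigma> | \<sigma> permutes S. sign \<sigma> * f (inv \<sigma>))"
    using assms by (intro sum.cong refl) (metis mem_Collect_eq permutation_permutes sign_inverse)
  finally show ?thesis ..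
qed

lemma permutes_atLeastAtMost_Suc_fixing_last:
  "{\<tau>. \<tau> permutes {1..Suc s} \<and> \<tau> (Suc s) = Suc s} = {\<tau>. \<tau> permutes {1..s}}"
proof (intro set_eqI iffI; clarify)
  fix \<tau> assume "\<tau> permutes {1..Suc s}" "\<tau> (Suc s) = Suc s"
  then show "\<tau> permutes {1..s}"
    by (auto intro: permutes_superset simp: le_Suc_eq)
next
  fix \<tau> assume "\<tau> permutes {1..s}"
  then show "\<tau> permutes {1..Suc s} \<and> \<tau> (Suc s) = Suc s"
    by (auto intro: permutes_subset simp: permutes_not_in)
qed

lemma inj_on_pointwise_le_imp_eq:
  fixes \<phi> \<psi> :: "'a \<Rightarrow> nat"
  assumes "finite S" "inj_on \<phi> S" "inj_on \<psi> S" "\<psi> ` S \<subseteq> {..<card S}"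
    and le: "\<And>x. x \<in> S \<Longrightarrow> \<phi> x \<le> \<psi> x" and "x \<in> S"
  shows "\<phi> x = \<psi> x"
proof -
  have sum_eq: "sum f S = \<Sum>{..<card S}" if "inj_on f S" "f ` S \<subseteq> {..<card S}" for f
  proof -
    have "f ` S = {..<card S}"
      using that by (intro card_subset_eq) (simp_all add: card_image)
    then show ?thesis
      using sum.reindex[OF that(1), of id] by simp
  qed
  have "\<phi> ` S \<subseteq> {..<card S}"
    using assms(4) le by (force simp: image_subset_iff)
  then have "(\<Sum>x\<in>S. \<psi> x - \<phi> x) = 0"
    using assms(2-4) le by (simp add: sum_subtractf_nat sum_eq)
  then have "\<psi> x \<le> \<phi> x"
    using assms(1,6) by (simp add: sum_eq_0_iff)
  with le[OF assms(6)] show ?thesis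
    by simp
qed

lemma prod_power_diff_expand:
  fixes x b :: "'i \<Rightarrow> 'a :: comm_ring_1"
  assumes "finite I"
  shows "(\<Prod>l\<in>I. (x l - b l) ^ n l) =
    (\<Sum>\<phi>\<in>PiE I (\<lambda>l. {..n l}).
       (\<Prod>l\<in>I. of_nat (n l choose \<phi> l) * (- b l) ^ (n l - \<phi> l)) * (\<Prod>l\<in>I. x l ^ \<phi> l))"
proof -
  have "(\<Prod>l\<in>I. (x l - b l) ^ n l) =
      (\<Prod>l\<in>I. \<Sum>i\<le>n l. of_nat (n l choose i) * x l ^ i * (- b l) ^ (n l - i))"
    by (intro prod.cong refl) (metis binomial_ring diff_conv_add_uminus)
  also have "\<dots> = (\<Sum>\<phi>\<in>PiE I (\<lambda>l. {..n l}).
      \<Prod>l\<in>I. of_nat (n l choose \<phi> l) * x l ^ \<phi> l * (- b l) ^ (n l - \<phi> l))"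
    using assms by (intro prod_sum_PiE) auto
  finally show ?thesis
    by (simp add: prod.distrib mult_ac)
qed

lemma poly_eq_smult_prod_roots:
  fixes p :: "'a :: idom poly"
  assumes "finite A" "degree p \<le> card A" "\<And>a. a \<in> A \<Longrightarrow> poly p a = 0"
  shows "p = smult (coeff p (card A)) (\<Prod>a\<in>A. [:- a, 1:])"
proof -
  let ?q = "smult (coeff p (card A)) (\<Prod>a\<in>A. [:- a, 1:])"
  have deg_prod: "degree (\<Prod>a\<in>A. [:- a, 1:]) = card A"
    by (simp add: degree_prod_sum_eq)
  then have coeff_prod: "coeff (\<Prod>a\<in>A. [:- a, 1:]) (card A) = 1"
    using lead_coeff_prod[of "\<lambda>a. [:- a, 1:]" A] by simp
  define r where "r = p - ?q"
  have "degree r \<le> card A"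
    unfolding r_def using assms(2) deg_prod by (intro degree_diff_le) auto
  moreover have "coeff r (card A) = 0"
    unfolding r_def using coeff_prod by simp
  ultimately have deg: "degree r < card A \<or> r = 0"
    by (metis le_neq_implies_less leading_coeff_0_iff)
  have "A \<subseteq> {x. poly r x = 0}"
    using assms(1,3) by (auto simp: r_def poly_prod)
  then have "r = 0"
    using deg card_mono[OF poly_roots_finite] card_poly_roots_bound by (metis not_le order.trans)
  then show ?thesis by (simp add: r_def)
qed

definition vandermonde_det :: "nat \<Rightarrow> (nat \<Rightarrow> 'a :: comm_ring_1) \<Rightarrow> 'a" where
  "vandermonde_det s z =
     (\<Sum>\<tau> | \<tau> permutes {1..s}. of_int (sign \<tau>) * (\<Prod>l\<in>{1..s}. z l ^ (\<tau> l - 1)))"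

lemma vandermonde_det_eq_0_if_repeated:
  fixes z :: "nat \<Rightarrow> 'a :: {idom, ring_char_0}"
  assumes "a \<in> {1..s}" "b \<in> {1..s}" "a \<noteq> b" "z a = z b"
  shows "vandermonde_det s z = 0"
  unfolding vandermonde_det_def
proof (rule sum_sign_eq_0_if_transpose_invariant[OF _ assms(1-3)])
  fix \<rho> :: "nat \<Rightarrow> nat"
  let ?t = "transpose a b"
  have "(\<Prod>l\<in>{1..s}. z l ^ ((\<rho> \<circ> ?t) l - 1)) = (\<Prod>l\<in>{1..s}. z (?t l) ^ (\<rho> l - 1))"
    by (rule prod.reindex_bij_witness[where i = ?t and j = ?t]) (use assms in \<open>auto simp: transpose_def\<close>)
  also have "\<dots> = (\<Prod>l\<in>{1..s}. z l ^ (\<rho> l - 1))"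
    using assms(4) by (intro prod.cong) (auto simp: transpose_def)
  finally show "(\<Prod>l\<in>{1..s}. z l ^ ((\<rho> \<circ> ?t) l - 1)) = (\<Prod>l\<in>{1..s}. z l ^ (\<rho> l - 1))" .
qed simp

lemma vandermonde_det_Suc_as_poly:
  fixes z :: "nat \<Rightarrow> 'a :: comm_ring_1"
  obtains p where "\<And>x. poly p x = vandermonde_det (Suc s) (z(Suc s := x))"
    and "degree p \<le> s" and "coeff p s = vandermonde_det s z"
proof
  let ?P = "{\<tau>. \<tau> permutes {1..Suc s}}"
  let ?c = "\<lambda>\<tau>. of_int (sign \<tau>) * (\<Prod>l\<in>{1..s}. z l ^ (\<tau> l - 1))"
  define p where "p = (\<Sum>\<tau>\<in>?P. monom (?c \<tau>) (\<tau> (Suc s) - 1))"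
  have last: "\<tau> (Suc s) - 1 \<le> s" "\<tau> (Suc s) - 1 = s \<longleftrightarrow> \<tau> (Suc s) = Suc s"
    if "\<tau> permutes {1..Suc s}" for \<tau>
    using permutes_in_image[OF that, of "Suc s"] by auto
  show "poly p x = vandermonde_det (Suc s) (z(Suc s := x))" for x
    unfolding p_def vandermonde_det_def poly_sum poly_monom
    by (intro sum.cong refl) (simp add: prod.cl_ivl_Suc mult.assoc)
  show "degree p \<le> s"
    unfolding p_def
  proof (intro degree_sum_le finite_permutations order.trans[OF degree_monom_le])
    fix \<tau> assume "\<tau> \<in> ?P"
    then show "\<tau> (Suc s) - 1 \<le> s" using last(1) by blast
  qed simp
  have "coeff p s = (\<Sum>\<tau>\<in>?P. if \<tau> (Suc s) = Suc s then ?c \<tau> else 0)"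
    unfolding p_def coeff_sum coeff_monom
    by (intro sum.cong refl) (simp only: mem_Collect_eq last(2))
  also have "\<dots> = (\<Sum>\<tau> | \<tau> permutes {1..Suc s} \<and> \<tau> (Suc s) = Suc s. ?c \<tau>)"
    by (simp add: sum.inter_filter[OF finite_permutations, symmetric] conj_commute)
  finally show "coeff p s = vandermonde_det s z"
    by (simp only: permutes_atLeastAtMost_Suc_fixing_last vandermonde_det_def)
qed

lemma vandermonde_det_Suc:
  fixes z :: "nat \<Rightarrow> 'a :: {idom, ring_char_0}"
  shows "vandermonde_det (Suc s) z = vandermonde_det s z * (\<Prod>v\<in>{1..s}. z (Suc s) - z v)"
proof (cases "inj_on z {1..s}")
  case False
  then obtain a b where "a \<in> {1..s}" "b \<in> {1..s}" "a \<noteq> b" "z a = z b"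
    unfolding inj_on_def by blast
  then show ?thesis
    using vandermonde_det_eq_0_if_repeated[of a s b z]
      vandermonde_det_eq_0_if_repeated[of a "Suc s" b z] by simp
next
  case True
  \<comment> \<open>Both sides are polynomials of degree at most s in z (Suc s) with leading coefficient
    vandermonde_det s z and the s distinct roots z 1, ..., z s.\<close>
  obtain p where p: "\<And>x. poly p x = vandermonde_det (Suc s) (z(Suc s := x))"
    and deg: "degree p \<le> s" and coeff: "coeff p s = vandermonde_det s z"
    using vandermonde_det_Suc_as_poly[of s z] by blast
  have card: "card (z ` {1..s}) = s"
    using True by (simp add: card_image)
  have "poly p a = 0" if "a \<in> z ` {1..s}" for a
  proof -
    from that obtain v where "v \<in> {1..s}" "a = z v" by blast
    then show ?thesis
      unfolding p by (intro vandermonde_det_eq_0_if_repeated[of v _ "Suc s"]) auto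
  qed
  then have "p = smult (vandermonde_det s z) (\<Prod>a\<in>z ` {1..s}. [:- a, 1:])"
    using poly_eq_smult_prod_roots[of "z ` {1..s}" p] deg card coeff by simp
  then have "poly p (z (Suc s)) = vandermonde_det s z * (\<Prod>v\<in>{1..s}. z (Suc s) - z v)"
    using True by (simp add: poly_prod prod.reindex)
  then show ?thesis
    by (simp add: p)
qed

lemma Delta_eq_vandermonde_det: "Delta s z = vandermonde_det s z"
proof (induction s)
  case 0
  then show ?case
    by (simp add: Delta_def vandermonde_det_def)
next
  case (Suc s)
  have "Delta (Suc s) z = Delta s z * (\<Prod>v\<in>{1..s}. z (Suc s) - z v)"
    unfolding Delta_def by (simp add: atLeastLessThanSuc_atLeastAtMost)
  then show ?case
    using Suc by (simp add: vandermonde_det_Suc)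
qed

definition alternant :: "(nat \<Rightarrow> 'a :: comm_ring_1) \<Rightarrow> nat \<Rightarrow> (nat \<Rightarrow> nat) \<Rightarrow> 'a" where
  "alternant d s \<phi> =
     (\<Sum>\<sigma> | \<sigma> permutes {1..s}. of_int (sign \<sigma>) * (\<Prod>l\<in>{1..s}. d (\<sigma> l) ^ \<phi> l))"

lemma alternant_eq_0_if_not_inj:
  fixes d :: "nat \<Rightarrow> 'a :: {idom, ring_char_0}"
  assumes "\<not> inj_on \<phi> {1..s}"
  shows "alternant d s \<phi> = 0"
proof -
  obtain a b where ab: "a \<in> {1..s}" "b \<in> {1..s}" "a \<noteq> b" "\<phi> a = \<phi> b"
    using assms unfolding inj_on_def by blast
  show ?thesis
    unfolding alternant_def
  proof (rule sum_sign_eq_0_if_transpose_invariant[OF _ ab(1-3)])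
    fix \<rho> :: "nat \<Rightarrow> nat"
    let ?t = "transpose a b"
    have "(\<Prod>l\<in>{1..s}. d ((\<rho> \<circ> ?t) l) ^ \<phi> l) = (\<Prod>l\<in>{1..s}. d (\<rho> l) ^ \<phi> (?t l))"
      by (rule prod.reindex_bij_witness[where i = ?t and j = ?t]) (use ab in \<open>auto simp: transpose_def\<close>)
    also have "\<dots> = (\<Prod>l\<in>{1..s}. d (\<rho> l) ^ \<phi> l)"
      using ab(4) by (intro prod.cong) (auto simp: transpose_def)
    finally show "(\<Prod>l\<in>{1..s}. d ((\<rho> \<circ> ?t) l) ^ \<phi> l) = (\<Prod>l\<in>{1..s}. d (\<rho> l) ^ \<phi> l)" .
  qed simp
qed

lemma alternant_cong:
  assumes "\<And>l. l \<in> {1..s} \<Longrightarrow> \<phi> l = \<psi> l"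
  shows "alternant d s \<phi> = alternant d s \<psi>"
  unfolding alternant_def using assms by (intro sum.cong prod.cong refl) auto

lemma sum_alternants_below_perm:
  fixes d :: "nat \<Rightarrow> 'a :: {idom, ring_char_0}"
  assumes \<tau>: "\<tau> permutes {1..s}"
  shows "(\<Sum>\<phi>\<in>PiE {1..s} (\<lambda>l. {..\<tau> l - 1}). c \<phi> * alternant d s \<phi>) =
    c (restrict (\<lambda>l. \<tau> l - 1) {1..s}) * alternant d s (\<lambda>l. \<tau> l - 1)"
proof -
  let ?E = "PiE {1..s} (\<lambda>l. {..\<tau> l - 1})"
  let ?top = "restrict (\<lambda>l. \<tau> l - 1) {1..s}"
  have \<tau>_range: "\<tau> l \<in> {1..s}" if "l \<in> {1..s}" for l
    using permutes_in_image[OF \<tau>] that by simp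
  have top_inj: "inj_on (\<lambda>l. \<tau> l - 1) {1..s}"
  proof (rule inj_onI)
    fix l m assume "l \<in> {1..s}" "m \<in> {1..s}" "\<tau> l - 1 = \<tau> m - 1"
    then have "\<tau> l = \<tau> m"
      using \<tau>_range[of l] \<tau>_range[of m] by auto
    then show "l = m"
      using permutes_inj[OF \<tau>] by (simp add: inj_eq)
  qed
  have top_range: "(\<lambda>l. \<tau> l - 1) ` {1..s} \<subseteq> {..<card {1..s}}"
    using \<tau>_range by fastforce
  have "alternant d s \<phi> = 0" if \<phi>: "\<phi> \<in> ?E" "\<phi> \<noteq> ?top" for \<phi>
  proof (rule alternant_eq_0_if_not_inj, rule notI)
    assume "inj_on \<phi> {1..s}"
    then have "\<phi> l = \<tau> l - 1" if "l \<in> {1..s}" for l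
      using PiE_mem[OF \<phi>(1)] that
      by (intro inj_on_pointwise_le_imp_eq[OF _ _ top_inj top_range]) auto
    then have "restrict \<phi> {1..s} = ?top"
      by (rule restrict_ext)
    then have "\<phi> = ?top"
      using PiE_restrict[OF \<phi>(1)] by simp
    with \<phi>(2) show False ..
  qed
  moreover have "?top \<in> ?E"
    by simp
  ultimately have "(\<Sum>\<phi>\<in>?E. c \<phi> * alternant d s \<phi>) = (\<Sum>\<phi>\<in>{?top}. c \<phi> * alternant d s \<phi>)"
    by (intro sum.mono_neutral_right finite_PiE) auto
  also have "\<dots> = c ?top * alternant d s (\<lambda>l. \<tau> l - 1)"
    using alternant_cong[of s ?top "\<lambda>l. \<tau> l - 1" d] by simp
  finally show ?thesis .
qed

lemma Delta_diff_expand: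
  "Delta s (\<lambda>l. x l - b l) =
    (\<Sum>\<tau> | \<tau> permutes {1..s}. \<Sum>\<phi>\<in>PiE {1..s} (\<lambda>l. {..\<tau> l - 1}).
       sign \<tau> * (\<Prod>l\<in>{1..s}. of_nat (\<tau> l - 1 choose \<phi> l) * (- b l) ^ (\<tau> l - 1 - \<phi> l)) *
       (\<Prod>l\<in>{1..s}. x l ^ \<phi> l))"
  unfolding Delta_eq_vandermonde_det vandermonde_det_def of_int_eq_id id_apply
    prod_power_diff_expand[OF finite_atLeastAtMost]
  by (simp only: sum_distrib_left mult.assoc)

lemma sum_sign_Delta_shift:
  fixes d \<beta> :: "nat \<Rightarrow> int"
  shows "(\<Sum>\<sigma> | \<sigma> permutes {1..s}. sign \<sigma> * Delta s (\<lambda>l. d (\<sigma> l) - \<beta> l)) =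
    (\<Sum>\<tau> | \<tau> permutes {1..s}. sign \<tau> * alternant d s (\<lambda>l. \<tau> l - 1))"
proof -
  let ?P = "{\<sigma>. \<sigma> permutes {1..s}}"
  define E where "E \<tau> = PiE {1..s} (\<lambda>l. {..\<tau> l - 1})" for \<tau> :: "nat \<Rightarrow> nat"
  define c where "c \<tau> \<phi> =
    sign \<tau> * (\<Prod>l\<in>{1..s}. of_nat (\<tau> l - 1 choose \<phi> l) * (- \<beta> l) ^ (\<tau> l - 1 - \<phi> l))"
    for \<tau> \<phi> :: "nat \<Rightarrow> nat"
  have "(\<Sum>\<sigma>\<in>?P. sign \<sigma> * Delta s (\<lambda>l. d (\<sigma> l) - \<beta> l)) =
      (\<Sum>\<sigma>\<in>?P. \<Sum>\<tau>\<in>?P. \<Sum>\<phi>\<in>E \<tau>. c \<tau> \<phi> * (sign \<sigma> * (\<Prod>l\<in>{1..s}. d (\<sigma> l) ^ \<phi> l)))"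
    unfolding Delta_diff_expand E_def c_def by (simp only: sum_distrib_left mult_ac)
  also have "\<dots> = (\<Sum>\<tau>\<in>?P. \<Sum>\<phi>\<in>E \<tau>. \<Sum>\<sigma>\<in>?P. c \<tau> \<phi> * (sign \<sigma> * (\<Prod>l\<in>{1..s}. d (\<sigma> l) ^ \<phi> l)))"
    by (subst sum.swap) (rule sum.cong[OF refl], rule sum.swap)
  also have "\<dots> = (\<Sum>\<tau>\<in>?P. \<Sum>\<phi>\<in>E \<tau>. c \<tau> \<phi> * alternant d s \<phi>)"
    by (simp add: alternant_def sum_distrib_left)
  also have "\<dots> = (\<Sum>\<tau>\<in>?P. c \<tau> (restrict (\<lambda>l. \<tau> l - 1) {1..s}) * alternant d s (\<lambda>l. \<tau> l - 1))"
    unfolding E_def by (intro sum.cong refl sum_alternants_below_perm) simp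
  also have "\<dots> = (\<Sum>\<tau>\<in>?P. sign \<tau> * alternant d s (\<lambda>l. \<tau> l - 1))"
    by (simp add: c_def)
  finally show ?thesis .
qed

lemma sum_sign_Delta_perm_act_shift:
  "(\<Sum>\<sigma> | \<sigma> permutes {1..s}. sign \<sigma> * Delta s (\<lambda>l. perm_act_shift \<alpha> \<sigma> \<Gamma> l - ind_vec M l)) =
    (\<Sum>\<tau> | \<tau> permutes {1..s}. sign \<tau> * alternant (\<lambda>i. \<Gamma> i + \<alpha> i) s (\<lambda>l. \<tau> l - 1))"
proof -
  let ?d = "\<lambda>i. \<Gamma> i + \<alpha> i" and ?\<beta> = "\<lambda>l. \<alpha> l + ind_vec M l"
  have "(\<lambda>l. perm_act_shift \<alpha> \<sigma> \<Gamma> l - ind_vec M l) = (\<lambda>l. ?d (inv \<sigma> l) - ?\<beta> l)" for \<sigma>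
    by (simp add: perm_act_shift_def perm_act_def fun_eq_iff)
  then have "(\<Sum>\<sigma> | \<sigma> permutes {1..s}. sign \<sigma> * Delta s (\<lambda>l. perm_act_shift \<alpha> \<sigma> \<Gamma> l - ind_vec M l)) =
      (\<Sum>\<sigma> | \<sigma> permutes {1..s}. sign \<sigma> * Delta s (\<lambda>l. ?d (\<sigma> l) - ?\<beta> l))"
    using sum_sign_comp_inv[of "{1..s}" "\<lambda>\<sigma>. Delta s (\<lambda>l. ?d (\<sigma> l) - ?\<beta> l)"] by simp
  then show ?thesis
    using sum_sign_Delta_shift[where d = ?d and \<beta> = ?\<beta>] by simp
qed

lemma sum_Pow_insert:
  assumes "finite A" "a \<notin> A"
  shows "(\<Sum>M\<in>Pow (insert a A). f M) = (\<Sum>M\<in>Pow A. f M + f (insert a M))"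
proof -
  have "inj_on (insert a) (Pow A)"
    using assms(2) by (intro inj_onI) (metis PowD insert_ident subsetD)
  moreover have "(\<Sum>M\<in>Pow (insert a A). f M) = (\<Sum>M\<in>Pow A. f M) + (\<Sum>M\<in>insert a ` Pow A. f M)"
    unfolding Pow_insert using assms by (intro sum.union_disjoint) auto
  ultimately show ?thesis
    by (simp add: sum.reindex sum.distrib)
qed

lemma sum_Pow_alternating_power_eq_0:
  assumes "finite P" "u < card P"
  shows "(\<Sum>M\<in>Pow P. (- 1) ^ card M * of_nat (card M) ^ u :: 'a :: comm_ring_1) = 0"
  using assms
proof (induction P arbitrary: u rule: finite_induct)
  case empty
  then show ?case by simp
next
  case (insert a P)
  let ?f = "\<lambda>j M. (- 1) ^ card M * of_nat (card M) ^ j :: 'a"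
  have binom: "(1 + x) ^ u = x ^ u + (\<Sum>j<u. of_nat (u choose j) * x ^ j)" for x :: 'a
    using binomial_ring[of x 1 u] by (simp add: add.commute flip: lessThan_Suc_atMost)
  have step: "?f u M + ?f u (insert a M) = - (\<Sum>j<u. of_nat (u choose j) * ?f j M)"
    if "M \<in> Pow P" for M
  proof -
    have "finite M" "a \<notin> M"
      using that insert.hyps finite_subset by auto
    then have "?f u (insert a M) = - ((- 1) ^ card M * (1 + of_nat (card M)) ^ u)"
      by simp
    also have "\<dots> = - ((- 1) ^ card M * (of_nat (card M) ^ u +
        (\<Sum>j<u. of_nat (u choose j) * of_nat (card M) ^ j)))"
      by (simp only: binom)
    also have "\<dots> = - ?f u M - (\<Sum>j<u. of_nat (u choose j) * ?f j M)"
      by (simp add: ring_distribs sum_distrib_left mult_ac)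
    finally show ?thesis
      by simp
  qed
  have "(\<Sum>M\<in>Pow (insert a P). ?f u M) = - (\<Sum>M\<in>Pow P. \<Sum>j<u. of_nat (u choose j) * ?f j M)"
    using insert.hyps by (simp add: sum_Pow_insert step sum_negf)
  also have "\<dots> = - (\<Sum>j<u. of_nat (u choose j) * (\<Sum>M\<in>Pow P. ?f j M))"
    by (subst sum.swap) (simp add: sum_distrib_left)
  also have "\<dots> = 0"
    using insert.prems insert.hyps by (simp add: insert.IH)
  finally show ?case .
qed

theorem lemma6p3:
  fixes s u :: nat and \<Gamma> \<alpha> :: "nat \<Rightarrow> int" and Pi_set :: "nat set"
  assumes "s \<ge> 1"
    and "Pi_set \<subseteq> {1..s}"
    and "card Pi_set > u"
  shows "(\<Sum>\<sigma>\<in>{\<sigma>. \<sigma> permutes {1..s}}. \<Sum>M\<in>Pow Pi_set.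
            (-1) ^ card M * sign \<sigma>
            * Delta s (\<lambda>l. perm_act_shift \<alpha> \<sigma> \<Gamma> l - ind_vec M l)
            * (int (card M)) ^ u) = 0"
proof -
  let ?P = "{\<sigma>. \<sigma> permutes {1..s}}"
  let ?\<Phi> = "\<Sum>\<tau>\<in>?P. sign \<tau> * alternant (\<lambda>i. \<Gamma> i + \<alpha> i) s (\<lambda>l. \<tau> l - 1)"
  have "(\<Sum>\<sigma>\<in>?P. \<Sum>M\<in>Pow Pi_set. (-1) ^ card M * sign \<sigma>
            * Delta s (\<lambda>l. perm_act_shift \<alpha> \<sigma> \<Gamma> l - ind_vec M l) * (int (card M)) ^ u)
      = (\<Sum>M\<in>Pow Pi_set. (-1) ^ card M * int (card M) ^ u
            * (\<Sum>\<sigma>\<in>?P. sign \<sigma> * Delta s (\<lambda>l. perm_act_shift \<alpha> \<sigma> \<Gamma> l - ind_vec M l)))"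
    by (subst sum.swap) (simp add: sum_distrib_left mult_ac)
  also have "\<dots> = (\<Sum>M\<in>Pow Pi_set. (-1) ^ card M * int (card M) ^ u) * ?\<Phi>"
    by (simp only: sum_sign_Delta_perm_act_shift sum_distrib_right)
  also have "\<dots> = 0"
    using assms(3) finite_subset[OF assms(2)] by (simp add: sum_Pow_alternating_power_eq_0)
  finally show ?thesis .
qed

end
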